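(* Let $k\in\mathbb{Z}$. For every $n\in\mathbb{N}=\{1,2,\dots\}$, $$E_{n-1}^{(k)}(x)=\frac{1}{n}\sum_{j=1}^{n}\sum_{m=1}^{j}\binom{n}{j}\frac{S_{1}(j,m)}{m^{k-1}}E_{n-j}(x).$$
   Context: Euler polynomials $E_n(x)$ are defined by $\frac{2}{e^t+1}e^{xt}=\sum_{n=0}^{\infty}E_n(x)\frac{t^n}{n!}$. For $k\in\mathbb{Z}$, $\mathrm{Ei}_k(x)=\sum_{n=1}^{\infty}\frac{x^n}{n^k(n-1)!}$; the poly-Genocchi polynomials $G_n^{(k)}(x)$ are defined by $\frac{2\,\mathrm{Ei}_k(\log(1+t))}{e^t+1}e^{xt}=\sum_{n=0}^{\infty}G_n^{(k)}(x)\frac{t^n}{n!}$, and the poly-Euler polynomials are $E_n^{(k)}(x)=\frac{G_{n+1}^{(k)}(x)}{n+1}$ ($n\ge0$). $S_1(n,m)$ are the signed Stirling numbers of the first kind: $\frac{(\log(1+t))^m}{m!}=\sum_{n=m}^{\infty}S_1(n,m)\frac{t^n}{n!}$. *)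

theory Defs
  imports "HOL-Computational_Algebra.Formal_Power_Series"
begin

definition euler_gf :: "real \<Rightarrow> real fps" where
  "euler_gf x = fps_const 2 * inverse (fps_exp 1 + 1) * fps_exp x"

definition euler_poly :: "nat \<Rightarrow> real \<Rightarrow> real" where
  "euler_poly n x = fact n * fps_nth (euler_gf x) n"

definition Ei_fps :: "int \<Rightarrow> real fps" where
  "Ei_fps k = Abs_fps (\<lambda>n. if n = 0 then 0 else 1 / ((real n powi k) * fact (n - 1)))"

definition poly_genocchi :: "int \<Rightarrow> nat \<Rightarrow> real \<Rightarrow> real" where
  "poly_genocchi k n x = fact n * fps_nth (fps_compose (Ei_fps k) (fps_ln 1) * euler_gf x) n"

definition poly_euler :: "int \<Rightarrow> nat \<Rightarrow> real \<Rightarrow> real" where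
  "poly_euler k n x = poly_genocchi k (n + 1) x / real (n + 1)"

text \<open>Signed Stirling numbers of the first kind: (log(1+t))^m/m! = sum S1(n,m) t^n/n!.\<close>
definition S1 :: "nat \<Rightarrow> nat \<Rightarrow> real" where
  "S1 n m = fact n * fps_nth (fps_const (1 / fact m) * fps_ln 1 ^ m) n"

end

theory Submission
  imports Defs
begin

unbundle fps_syntax

text \<open>
  Expanding \<open>Ei_k\<close> in powers of \<open>log(1+t)\<close>, the Stirling numbers give the
  \<open>j\<close>-th exponential coefficient of \<open>Ei_k(log(1+t))\<close> as the inner sum
  \<open>\<Sum>_m S1(j,m)/m^(k-1)\<close>. The generating function of the poly-Genocchi polynomials
  is this series times that of the Euler polynomials, so \<open>G_n^(k)(x)\<close> is their
  binomial convolution; dividing by \<open>n\<close> gives \<open>E_(n-1)^(k)(x)\<close>.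
\<close>

lemma fps_mult_nth_binomial:
  fixes f g :: "'a::field_char_0 fps"
  shows "fact n * (f * g) $ n =
    (\<Sum>i=0..n. of_nat (n choose i) * (fact i * f $ i) * (fact (n - i) * g $ (n - i)))"
proof -
  have "fact n * (f * g) $ n = (\<Sum>i=0..n. fact n * (f $ i * g $ (n - i)))"
    by (simp add: fps_mult_nth sum_distrib_left)
  also have "\<dots> = (\<Sum>i=0..n. of_nat (n choose i) * (fact i * f $ i) * (fact (n - i) * g $ (n - i)))"
    by (intro sum.cong) (simp_all add: binomial_fact field_simps)
  finally show ?thesis .
qed

lemma fps_compose_ln_nth:
  fixes f :: "real fps"
  assumes "f $ 0 = 0"
  shows "fact j * (f oo fps_ln 1) $ j = (\<Sum>m=1..j. fact m * f $ m * S1 j m)"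
proof -
  have "fact j * (f oo fps_ln 1) $ j = (\<Sum>m=0..j. fact j * (f $ m * (fps_ln 1 ^ m) $ j))"
    by (simp add: fps_compose_nth sum_distrib_left)
  also have "\<dots> = (\<Sum>m=0..j. fact m * f $ m * S1 j m)"
    by (intro sum.cong) (simp_all add: S1_def)
  also have "\<dots> = (\<Sum>m=1..j. fact m * f $ m * S1 j m)"
    using assms by (simp add: sum.atLeast_Suc_atMost)
  finally show ?thesis .
qed

lemma Ei_fps_nth_0: "Ei_fps k $ 0 = 0"
  by (simp add: Ei_fps_def)

lemma fact_mult_Ei_fps_nth:
  assumes "m \<ge> 1"
  shows "fact m * Ei_fps k $ m = 1 / real m powi (k - 1)"
proof -
  have "fact m = real m * fact (m - 1)"
    using assms by (simp add: fact_reduce)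
  moreover have "real m powi k = real m * real m powi (k - 1)"
    using assms by (simp add: power_int_diff)
  ultimately show ?thesis
    using assms by (simp add: Ei_fps_def)
qed

theorem theorem3:
  fixes k :: int and n :: nat and x :: real
  assumes "n \<ge> 1"
  shows "poly_euler k (n - 1) x =
    (1 / real n) * (\<Sum>j=1..n. \<Sum>m=1..j.
       real (n choose j) * (S1 j m / (real m powi (k - 1))) * euler_poly (n - j) x)"
proof -
  define C where "C = Ei_fps k oo fps_ln 1"
  have C_nth: "fact j * C $ j = (\<Sum>m=1..j. S1 j m / real m powi (k - 1))" for j
    unfolding C_def fps_compose_ln_nth[OF Ei_fps_nth_0]
    by (intro sum.cong) (auto simp: fact_mult_Ei_fps_nth)
  have "poly_genocchi k n x =
      (\<Sum>j=0..n. real (n choose j) * (fact j * C $ j) * euler_poly (n - j) x)"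
    by (simp add: poly_genocchi_def fps_mult_nth_binomial euler_poly_def C_def)
  also have "\<dots> = (\<Sum>j=1..n. \<Sum>m=1..j.
      real (n choose j) * (S1 j m / real m powi (k - 1)) * euler_poly (n - j) x)"
    by (simp add: C_nth sum.atLeast_Suc_atMost sum_distrib_left sum_distrib_right)
  finally show ?thesis
    using assms by (simp add: poly_euler_def)
qed

end
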